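(* Fix integers $k,r\ge 1$ and $n\ge 0$. Let $R_{k,r}(n)=\frac{r}{kn+r}\binom{kn+r}{n}$. Then $R_{k,r}(n)$ equals the number of ordered $r$-tuples $(T_1,\dots,T_r)$ for which there is a sequence of nonnegative integers $(i_1,\dots,i_r)$ with $i_1+\dots+i_r=n$ such that $T_j\in\mathrm{SVT}(i_j^2,\rho^{(i_j)})$ for each $j$, where $\rho^{(i)}$ is the density on the two-row shape $i^2=(i,i)$ with $\rho_{1,c}=1$ and $\rho_{2,c}=k-1$ for all columns $c$ (for $i_j=0$, $T_j$ is the unique empty tableau).
   Context: For $i\ge 0$, $i^2$ denotes the two-row rectangular shape $(i,i)$. A density on a shape $\lambda$ is an assignment of a nonnegative integer $\rho_{i,j}$ to every cell $(i,j)$ (row $i$, column $j$); let $N=\sum\rho_{i,j}$. A standard set-valued Young tableau of shape $\lambda$ and density $\rho$ assigns to each cell $(i,j)$ a set $S_{i,j}$ with $|S_{i,j}|=\rho_{i,j}$, the sets partitioning $[N]$, such that every element of $S_{i,j}$ is smaller than every element of $S_{i,j+1}$ and of $S_{i+1,j}$ whenever those cells exist (conditions involving an empty set are vacuous). $\mathrm{SVT}(\lambda,\rho)$ is the set of these tableaux. *)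

theory Defs
  imports Complex_Main
begin

text \<open>A shape (partition) is given by its list of row lengths; cells are (row, column),
  1-indexed.\<close>
definition cells :: "nat list \<Rightarrow> (nat \<times> nat) set" where
  "cells lam = {(i, j). 1 \<le> i \<and> i \<le> length lam \<and> 1 \<le> j \<and> j \<le> lam ! (i - 1)}"

definition rect2 :: "nat \<Rightarrow> nat list" where
  "rect2 i = [i, i]"

definition total_density :: "nat list \<Rightarrow> (nat \<times> nat \<Rightarrow> nat) \<Rightarrow> nat" where
  "total_density lam rho = (\<Sum>c\<in>cells lam. rho c)"

text \<open>Standard set-valued Young tableaux of shape lam and density rho.  A tableau is a
  function assigning a set to every cell; it is normalised to be empty outside the shape.\<close>
definition SVT :: "nat list \<Rightarrow> (nat \<times> nat \<Rightarrow> nat) \<Rightarrow> (nat \<times> nat \<Rightarrow> nat set) set" where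
  "SVT lam rho = {T.
     (\<forall>c. c \<notin> cells lam \<longrightarrow> T c = {}) \<and>
     (\<forall>c\<in>cells lam. finite (T c) \<and> card (T c) = rho c) \<and>
     (\<forall>c\<in>cells lam. \<forall>d\<in>cells lam. c \<noteq> d \<longrightarrow> T c \<inter> T d = {}) \<and>
     (\<Union>c\<in>cells lam. T c) = {1..total_density lam rho} \<and>
     (\<forall>i j. (i, j) \<in> cells lam \<and> (i, Suc j) \<in> cells lam \<longrightarrow>
            (\<forall>x\<in>T (i, j). \<forall>y\<in>T (i, Suc j). x < y)) \<and>
     (\<forall>i j. (i, j) \<in> cells lam \<and> (Suc i, j) \<in> cells lam \<longrightarrow>
            (\<forall>x\<in>T (i, j). \<forall>y\<in>T (Suc i, j). x < y))}"

definition rho_k :: "nat \<Rightarrow> nat \<times> nat \<Rightarrow> nat" where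
  "rho_k k c = (if fst c = 1 then 1 else k - 1)"

end

(*
  A tableau in SVT(i^2, rho^(i)) is determined by its first row A, a subset of {1..ki} of size i:
  row 1 lists A increasingly, one entry per cell, and row 2 lists the complement increasingly,
  k - 1 entries per cell.  The column condition holds exactly when A satisfies the ballot
  condition that every initial segment {1..m} has at most k - 1 non-elements of A per element
  of A.  Writing A as a word in which an element of A is an up-step of height k - 1 and a
  non-element a down-step of height 1, these tableaux become lattice paths from height 0 to 0.
  Decomposing a path from height h + 1 at its first passage to height h shows that r-tuples of
  such paths with n up-steps in total correspond to paths from height r - 1 with n up-steps.
  Counting the latter by this decomposition gives the recurrences of
  C(kn + r - 1, n) - (k - 1) C(kn + r - 1, n - 1), which equals r/(kn + r) C(kn + r, n).
*)
theory Submission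
  imports Defs
begin

lemma ex_Cons_eq_append_Cons:
  "(\<exists>u v. x # w = u @ y # v \<and> P u v) \<longleftrightarrow> x = y \<and> P [] w \<or> (\<exists>u v. w = u @ y # v \<and> P (x # u) v)"
  by (auto simp: Cons_eq_append_conv)

lemma card_UN_image_Times:
  fixes n :: nat
  assumes "\<And>m. m \<le> n \<Longrightarrow> finite (A m)" "\<And>m. m \<le> n \<Longrightarrow> finite (B m)"
    and "\<And>m m'. m \<le> n \<Longrightarrow> m' \<le> n \<Longrightarrow> m \<noteq> m' \<Longrightarrow> A m \<inter> A m' = {}"
    and "inj_on f (\<Union>m\<le>n. A m \<times> B (n - m))"
  shows "card (\<Union>m\<le>n. f ` (A m \<times> B (n - m))) = (\<Sum>m\<le>n. card (A m) * card (B (n - m)))"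
proof -
  have "card (\<Union>m\<le>n. f ` (A m \<times> B (n - m))) = card (\<Union>m\<le>n. A m \<times> B (n - m))"
    using card_image[OF assms(4)] by (simp add: image_UN)
  also have "\<dots> = (\<Sum>m\<le>n. card (A m \<times> B (n - m)))"
  proof (rule card_UN_disjoint)
    show "\<forall>m\<in>{..n}. finite (A m \<times> B (n - m))" using assms(1,2) by simp
    show "\<forall>m\<in>{..n}. \<forall>m'\<in>{..n}. m \<noteq> m' \<longrightarrow> A m \<times> B (n - m) \<inter> A m' \<times> B (n - m') = {}"
      using assms(3) by blast
  qed simp
  finally show ?thesis by (simp add: card_cartesian_product)
qed

section \<open>Ballot words\<close>

fun ballot :: "nat \<Rightarrow> nat \<Rightarrow> bool list \<Rightarrow> bool" where
  "ballot k h [] \<longleftrightarrow> h = 0"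
| "ballot k h (True # w) \<longleftrightarrow> ballot k (h + (k - 1)) w"
| "ballot k 0 (False # w) \<longleftrightarrow> False"
| "ballot k (Suc h) (False # w) \<longleftrightarrow> ballot k h w"

definition ballot_words :: "nat \<Rightarrow> nat \<Rightarrow> nat \<Rightarrow> bool list set" where
  "ballot_words k h n = {w. ballot k h w \<and> count_list w True = n}"

lemma length_ballot:
  assumes "k \<ge> 1" "ballot k h w"
  shows "length w = h + k * count_list w True"
  using assms(2)
proof (induction w arbitrary: h)
  case (Cons x w)
  with assms(1) show ?case by (cases x; cases h) auto
qed simp

lemma ballot_prefix_iff:
  "ballot k h w \<longleftrightarrow>
     (\<forall>j\<le>length w. count_list (take j w) False \<le> h + (k - 1) * count_list (take j w) True) \<and>
     count_list w False = h + (k - 1) * count_list w True"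
proof (induction w arbitrary: h)
  case (Cons x w)
  have all_le_Suc: "(\<forall>j\<le>Suc n. P j) \<longleftrightarrow> P 0 \<and> (\<forall>j\<le>n. P (Suc j))" for P n
    by (simp add: All_less_Suc2 flip: less_Suc_eq_le)
  show ?case
  proof (cases x)
    case True
    then show ?thesis using Cons.IH[of "h + (k - 1)"] by (simp add: all_le_Suc distrib_left add_ac)
  next
    case False
    then show ?thesis using Cons.IH[of "h - 1"] by (cases h) (auto simp: all_le_Suc)
  qed
qed simp

lemma ballot_add_Suc_iff:
  "ballot k (a + Suc h) w \<longleftrightarrow> (\<exists>u v. w = u @ False # v \<and> ballot k a u \<and> ballot k h v)"
proof (induction w arbitrary: a)
  case (Cons x w)
  show ?case
  proof (cases x)
    case True
    have "ballot k (a + Suc h) (x # w) \<longleftrightarrow> ballot k ((a + (k - 1)) + Suc h) w"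
      using True by (simp add: algebra_simps)
    with True show ?thesis using Cons.IH[of "a + (k - 1)"] by (simp add: ex_Cons_eq_append_Cons)
  next
    case False
    then show ?thesis using Cons.IH[of "a - 1"] by (cases a) (simp_all add: ex_Cons_eq_append_Cons)
  qed
qed simp

lemma ballot_append_False_unique:
  assumes "ballot k a u" "ballot k a u'" "u @ False # v = u' @ False # v'"
  shows "u = u' \<and> v = v'"
  using assms
proof (induction u arbitrary: a u')
  case Nil
  then show ?case by (cases u') (auto elim: ballot.elims)
next
  case (Cons x u)
  then obtain u'' where u': "u' = x # u''"
    by (cases u') (auto elim: ballot.elims)
  show ?case
  proof (cases x)
    case True
    then show ?thesis using Cons.IH[of "a + (k - 1)" u''] Cons.prems u' by auto
  next
    case False
    then obtain a' where "a = Suc a'" using Cons.prems(1) by (cases a) auto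
    with False show ?thesis using Cons.IH[of a' u''] Cons.prems u' by auto
  qed
qed

lemma finite_ballot_words:
  assumes "k \<ge> 1"
  shows "finite (ballot_words k h n)"
proof (rule finite_subset)
  show "ballot_words k h n \<subseteq> {w. set w \<subseteq> UNIV \<and> length w = h + k * n}"
    using length_ballot[OF assms] by (auto simp: ballot_words_def)
  show "finite {w :: bool list. set w \<subseteq> UNIV \<and> length w = h + k * n}"
    by (rule finite_lists_length_eq) simp
qed

lemma ballot_words_0: "ballot_words k h 0 = {replicate h False}"
proof -
  have "ballot k h w \<and> count_list w True = 0 \<longleftrightarrow> w = replicate h False" for w
  proof (induction w arbitrary: h)
    case (Cons x w)
    then show ?case by (cases x; cases h) auto
  qed simp
  then show ?thesis by (auto simp: ballot_words_def)
qed

lemma ballot_words_0_Suc: "ballot_words k 0 (Suc n) = Cons True ` ballot_words k (k - 1) n"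
  by (auto simp: ballot_words_def elim: ballot.elims)

lemma ballot_words_Suc_Suc:
  assumes "k \<ge> 1"
  shows "ballot_words k (Suc h) (Suc n) =
           Cons False ` ballot_words k h (Suc n) \<union> Cons True ` ballot_words k (h + k) n"
proof -
  have "Suc h + (k - 1) = h + k" using assms by simp
  then show ?thesis by (auto simp: ballot_words_def elim: ballot.elims)
qed

lemma ballot_words_Suc_eq_UN:
  "ballot_words k (Suc h) n =
     (\<Union>m\<le>n. (\<lambda>(u, v). u @ False # v) ` (ballot_words k 0 m \<times> ballot_words k h (n - m)))"
  using ballot_add_Suc_iff[of k 0 h]
  by (fastforce simp: ballot_words_def)

lemma card_ballot_words_Suc:
  assumes "k \<ge> 1"
  shows "card (ballot_words k (Suc h) n) =
           (\<Sum>m\<le>n. card (ballot_words k 0 m) * card (ballot_words k h (n - m)))"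
  unfolding ballot_words_Suc_eq_UN
proof (rule card_UN_image_Times)
  show "inj_on (\<lambda>(u, v). u @ False # v) (\<Union>m\<le>n. ballot_words k 0 m \<times> ballot_words k h (n - m))"
    by (auto simp: inj_on_def ballot_words_def dest: ballot_append_False_unique)
qed (auto simp: finite_ballot_words[OF assms], auto simp: ballot_words_def)

section \<open>Raney numbers\<close>

text \<open>An integer form of the Raney number \<open>r / (k n + r) * (k n + r choose n)\<close>
  (see \<open>real_of_int_raney\<close>) whose recurrences are plain Pascal identities.\<close>

definition raney :: "nat \<Rightarrow> nat \<Rightarrow> nat \<Rightarrow> int" where
  "raney k r n = int ((k * n + r - 1) choose n)
     - int (k - 1) * (if n = 0 then 0 else int ((k * n + r - 1) choose (n - 1)))"

lemma raney_0 [simp]: "raney k r 0 = 1"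
  by (simp add: raney_def)

lemma binomial_Suc_mult_Suc: "(m choose Suc n) * Suc n = (m choose n) * (m - n)"
  by (metis binomial_absorption binomial_absorb_comp mult.commute)

lemma raney_1_Suc:
  assumes "k \<ge> 1"
  shows "raney k 1 (Suc n) = raney k k n"
proof -
  define m where "m = k * n + (k - 1)"
  have "k * Suc n + 1 - 1 = Suc m" "k * n + k - 1 = m"
    using assms by (simp_all add: m_def)
  moreover have "m - n = (k - 1) * Suc n"
    using assms by (simp add: m_def algebra_simps diff_mult_distrib)
  then have "(m choose Suc n) * Suc n = ((k - 1) * (m choose n)) * Suc n"
    using binomial_Suc_mult_Suc[of m n] by (simp only: mult_ac)
  then have "int (m choose Suc n) = int (k - 1) * int (m choose n)"
    by (metis mult_right_cancel nat.distinct(1) of_nat_mult)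
  moreover have "int (Suc m choose n) = int (m choose n) + (if n = 0 then 0 else int (m choose (n - 1)))"
    by (cases n) simp_all
  ultimately show ?thesis
    by (simp add: raney_def algebra_simps)
qed

lemma raney_Suc_Suc_Suc:
  "raney k (Suc (Suc h)) (Suc n) = raney k (Suc h) (Suc n) + raney k (h + k + 1) n"
proof -
  define m where "m = k * n + k + h"
  have "k * Suc n + Suc (Suc h) - 1 = Suc m" "k * Suc n + Suc h - 1 = m" "k * n + (h + k + 1) - 1 = m"
    by (simp_all add: m_def)
  moreover have "int (Suc m choose n) = int (m choose n) + (if n = 0 then 0 else int (m choose (n - 1)))"
    by (cases n) simp_all
  ultimately show ?thesis by (simp add: raney_def algebra_simps)
qed

lemma card_ballot_words:
  assumes "k \<ge> 1"
  shows "int (card (ballot_words k h n)) = raney k (Suc h) n"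
proof (induction n arbitrary: h)
  case 0
  then show ?case by (simp add: ballot_words_0)
next
  case (Suc n)
  note IH_n = Suc.IH
  show ?case
  proof (induction h)
    case 0
    have "card (ballot_words k 0 (Suc n)) = card (ballot_words k (k - 1) n)"
      unfolding ballot_words_0_Suc by (rule card_image) simp
    then show ?case using IH_n[of "k - 1"] raney_1_Suc[OF assms, of n] assms by simp
  next
    case (Suc h)
    have "card (ballot_words k (Suc h) (Suc n)) =
            card (ballot_words k h (Suc n)) + card (ballot_words k (h + k) n)"
      unfolding ballot_words_Suc_Suc[OF assms]
      by (subst card_Un_disjoint) (auto simp: finite_ballot_words[OF assms] card_image)
    with Suc.IH IH_n[of "h + k"] show ?case by (simp add: raney_Suc_Suc_Suc)
  qed
qed

lemma real_of_int_raney: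
  assumes "r \<ge> 1" "k \<ge> 1"
  shows "of_int (raney k r n) = real r / real (k * n + r) * real ((k * n + r) choose n)"
proof (cases n)
  case 0
  with assms show ?thesis by simp
next
  case (Suc n')
  define m where "m = k * n + r - 1"
  define d where "d = (k - 1) * n + r"
  have sm: "k * n + r = Suc m" using assms by (simp add: m_def)
  have "n \<le> k * n" "(k - 1) * n = k * n - n" using assms by (simp_all add: diff_mult_distrib)
  then have d: "Suc m - n = d" "m - n' = d" using assms Suc unfolding d_def m_def by linarith+
  have "d > 0" using assms by (simp add: d_def)
  then have d_pos: "real d > 0" by simp
  have "d * (Suc m choose n) = Suc m * (m choose n)"
    using binomial_absorb_comp[of "Suc m" n] d by simp
  then have A: "real (Suc m choose n) = real (Suc m) * real (m choose n) / real d"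
    using d_pos by (simp add: field_simps flip: of_nat_mult)
  have "(m choose n) * n = (m choose n') * d"
    using binomial_Suc_mult_Suc[of m n'] d Suc by simp
  then have B: "real (m choose n') = real (m choose n) * real n / real d"
    using d_pos by (simp add: field_simps flip: of_nat_mult)
  have "of_int (raney k r n) = real (m choose n) - (real k - 1) * real (m choose n')"
    using Suc assms unfolding raney_def m_def by (simp add: of_nat_diff)
  also have "\<dots> = real (m choose n) * ((real d - (real k - 1) * real n) / real d)"
    unfolding B using d_pos by (simp add: field_simps)
  also have "\<dots> = real r / real (Suc m) * (real (Suc m) * real (m choose n) / real d)"
    using assms by (simp add: d_def of_nat_diff)
  finally show ?thesis unfolding sm A .
qed

section \<open>Ranks and blocks in finite sets of naturals\<close>

definition rank_in :: "nat set \<Rightarrow> nat \<Rightarrow> nat" where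
  "rank_in X x = card {y \<in> X. y \<le> x}"

lemma rank_in_mono: "finite X \<Longrightarrow> x \<le> y \<Longrightarrow> rank_in X x \<le> rank_in X y"
  unfolding rank_in_def by (rule card_mono) auto

lemma rank_in_strict_mono:
  assumes "finite X" "y \<in> X" "x < y"
  shows "rank_in X x < rank_in X y"
proof -
  have "y \<notin> {z \<in> X. z \<le> x}" "y \<in> {z \<in> X. z \<le> y}" using assms(2,3) by auto
  moreover have "{z \<in> X. z \<le> x} \<subseteq> {z \<in> X. z \<le> y}" using assms(3) by auto
  ultimately have "{z \<in> X. z \<le> x} \<subset> {z \<in> X. z \<le> y}" by blast
  then show ?thesis unfolding rank_in_def using assms(1) by (intro psubset_card_mono) auto
qed

lemma bij_betw_rank_in:
  assumes "finite X"
  shows "bij_betw (rank_in X) X {1..card X}"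
proof -
  have "inj_on (rank_in X) X"
    using rank_in_strict_mono[OF assms] by (metis inj_on_def linorder_neqE_nat less_irrefl_nat)
  moreover have "rank_in X ` X \<subseteq> {1..card X}"
  proof
    fix z assume "z \<in> rank_in X ` X"
    then obtain x where x: "x \<in> X" "z = rank_in X x" by blast
    then have "{y \<in> X. y \<le> x} \<noteq> {}" by auto
    then have "1 \<le> rank_in X x" using assms unfolding rank_in_def by (simp add: Suc_le_eq card_gt_0_iff)
    moreover have "rank_in X x \<le> card X" unfolding rank_in_def using assms by (intro card_mono) auto
    ultimately show "z \<in> {1..card X}" using x(2) by simp
  qed
  moreover have "card (rank_in X ` X) = card {1..card X}"
    using card_image[OF \<open>inj_on (rank_in X) X\<close>] by simp
  ultimately show ?thesis
    unfolding bij_betw_def using card_subset_eq[of "{1..card X}"] by blast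
qed

definition row_block :: "nat set \<Rightarrow> nat \<Rightarrow> nat \<Rightarrow> nat set" where
  "row_block X K j = {x \<in> X. rank_in X x \<in> {(j - 1) * K<..j * K}}"

lemma row_block_subset: "row_block X K j \<subseteq> X"
  by (auto simp: row_block_def)

lemma card_row_block:
  assumes "finite X" "1 \<le> j" "j * K \<le> card X"
  shows "card (row_block X K j) = K"
proof -
  let ?I = "{(j - 1) * K<..j * K}"
  have "bij_betw (rank_in X) (row_block X K j) ?I"
  proof (rule bij_betw_subset[OF bij_betw_rank_in[OF assms(1)]])
    show "row_block X K j \<subseteq> X" by (rule row_block_subset)
    have "?I \<subseteq> {1..card X}" using assms(3) by (auto simp: Suc_le_eq)
    moreover have "rank_in X ` row_block X K j = rank_in X ` X \<inter> ?I"
      unfolding row_block_def by blast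
    ultimately show "rank_in X ` row_block X K j = ?I"
      using bij_betw_rank_in[OF assms(1)] unfolding bij_betw_def by blast
  qed
  then have "card (row_block X K j) = card ?I" by (rule bij_betw_same_card)
  also have "\<dots> = K" using assms(2) by (simp add: diff_mult_distrib)
  finally show ?thesis .
qed

lemma disjoint_blocks:
  fixes K :: nat
  assumes "1 \<le> j" "1 \<le> l" "j \<noteq> l"
  shows "{(j - 1) * K<..j * K} \<inter> {(l - 1) * K<..l * K} = {}"
proof -
  have "{(j - 1) * K<..j * K} \<inter> {(l - 1) * K<..l * K} = {}" if "j < l" for j l :: nat
  proof -
    have "j * K \<le> (l - 1) * K" using that by (intro mult_le_mono1) simp
    then show ?thesis by auto
  qed
  then show ?thesis using assms by (metis Int_commute linorder_neqE_nat)
qed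

lemma UN_blocks:
  fixes i K :: nat
  shows "(\<Union>j\<in>{1..i}. {(j - 1) * K<..j * K}) = {1..K * i}"
proof (induction i)
  case (Suc i)
  have "{1..K * Suc i} = {1..K * i} \<union> {K * i<..K * Suc i}" by (auto simp: algebra_simps)
  with Suc show ?case by (simp add: atLeastAtMostSuc_conv mult.commute Un_commute)
qed simp

lemma row_blocks_disjoint:
  "1 \<le> j \<Longrightarrow> 1 \<le> l \<Longrightarrow> j \<noteq> l \<Longrightarrow> row_block X K j \<inter> row_block X K l = {}"
  using disjoint_blocks[of j l K] unfolding row_block_def by blast

lemma UN_row_blocks:
  assumes "finite X" "card X = K * i"
  shows "(\<Union>j\<in>{1..i}. row_block X K j) = X"
proof -
  have "rank_in X ` X = (\<Union>j\<in>{1..i}. {(j - 1) * K<..j * K})"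
    using bij_betw_rank_in[OF assms(1)] assms(2) UN_blocks[where i=i and K=K] by (simp add: bij_betw_def)
  then show ?thesis unfolding row_block_def by blast
qed

lemma row_block_less:
  assumes "finite X" "x \<in> row_block X K j" "y \<in> row_block X K (Suc j)"
  shows "x < y"
proof (rule ccontr)
  assume "\<not> x < y"
  then have "rank_in X y \<le> rank_in X x" by (simp add: rank_in_mono[OF assms(1)])
  with assms(2,3) show False unfolding row_block_def by auto
qed

lemma rank_in_eq_card_Int:
  "A \<subseteq> {1..N} \<Longrightarrow> rank_in A y = card (A \<inter> {1..y})"
  unfolding rank_in_def by (rule arg_cong[where f = card]) auto

lemma rank_in_complement:
  "y \<le> N \<Longrightarrow> rank_in ({1..N} - A) y = card ({1..y} - A)"
  unfolding rank_in_def by (rule arg_cong[where f = card]) auto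

context
  fixes S :: "nat \<Rightarrow> nat set" and i c :: nat
  assumes card_S: "\<And>j. j \<in> {1..i} \<Longrightarrow> finite (S j) \<and> card (S j) = c"
    and S_less_Suc: "\<And>j x y. 1 \<le> j \<Longrightarrow> Suc j \<le> i \<Longrightarrow> x \<in> S j \<Longrightarrow> y \<in> S (Suc j) \<Longrightarrow> x < y"
begin

lemma increasing_blocks_less:
  assumes "1 \<le> l" "l < j" "j \<le> i" "x \<in> S l" "y \<in> S j"
  shows "x < y"
proof -
  have "c \<noteq> 0" using card_S[of l] assms by (auto simp: card_gt_0_iff)
  then have nonempty: "S n \<noteq> {}" if "n \<in> {1..i}" for n
    using card_S[OF that] by auto
  have "Suc l \<le> j" using assms(2) by simp
  then have "\<forall>y\<in>S j. j \<le> i \<longrightarrow> x < y"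
  proof (induction j rule: dec_induct)
    case base
    then show ?case using S_less_Suc assms(1,4) by blast
  next
    case (step n)
    show ?case
    proof (intro ballI impI)
      fix y assume "y \<in> S (Suc n)" "Suc n \<le> i"
      moreover obtain z where "z \<in> S n" using nonempty[of n] step.hyps \<open>Suc n \<le> i\<close> assms(1) by auto
      ultimately show "x < y"
        using step.IH S_less_Suc[of n z y] step.hyps assms(1) by fastforce
    qed
  qed
  with assms show ?thesis by blast
qed

lemma increasing_blocks_disjoint:
  "l \<in> {1..i} \<Longrightarrow> l' \<in> {1..i} \<Longrightarrow> l \<noteq> l' \<Longrightarrow> S l \<inter> S l' = {}"
  using increasing_blocks_less[of l l'] increasing_blocks_less[of l' l]
  by (metis atLeastAtMost_iff disjoint_iff less_irrefl linorder_neqE_nat)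

lemma card_UN_increasing_blocks: "card (\<Union>l\<in>{1..i}. S l) = i * c"
proof -
  have "card (\<Union>l\<in>{1..i}. S l) = (\<Sum>l\<in>{1..i}. card (S l))"
    using card_S increasing_blocks_disjoint by (intro card_UN_disjoint) auto
  also have "\<dots> = i * c" using card_S by simp
  finally show ?thesis .
qed

lemma increasing_blocks_subset_row_block:
  assumes j: "j \<in> {1..i}"
  shows "S j \<subseteq> row_block (\<Union>l\<in>{1..i}. S l) c j"
proof
  fix x assume x: "x \<in> S j"
  let ?U = "\<Union>l\<in>{1..i}. S l"
  have fin: "finite (S l)" if "l \<in> {1..i}" for l using card_S[OF that] by simp
  have "{y \<in> ?U. y \<le> x} \<subseteq> (\<Union>l\<in>{1..j}. S l)"
    using increasing_blocks_less[of j _ x] x j by (force simp: not_le[symmetric])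
  then have "rank_in ?U x \<le> card (\<Union>l\<in>{1..j}. S l)"
    unfolding rank_in_def using fin j by (intro card_mono) auto
  also have "\<dots> \<le> (\<Sum>l\<in>{1..j}. card (S l))" by (rule card_UN_le) simp
  also have "\<dots> = j * c" using card_S j by simp
  finally have upper: "rank_in ?U x \<le> j * c" .
  have disj: "x \<notin> (\<Union>l\<in>{1..<j}. S l)"
    using increasing_blocks_less[of _ j x x] j x by fastforce
  have "card (\<Union>l\<in>{1..<j}. S l) = (\<Sum>l\<in>{1..<j}. card (S l))"
    using fin increasing_blocks_disjoint j by (intro card_UN_disjoint) auto
  also have "\<dots> = (j - 1) * c" using card_S j by simp
  finally have "card (insert x (\<Union>l\<in>{1..<j}. S l)) = Suc ((j - 1) * c)"
    using disj fin j by (subst card_insert_disjoint) auto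
  moreover have "insert x (\<Union>l\<in>{1..<j}. S l) \<subseteq> {y \<in> ?U. y \<le> x}"
    using increasing_blocks_less[of _ j _ x] x j by (force intro: less_imp_le)
  then have "card (insert x (\<Union>l\<in>{1..<j}. S l)) \<le> rank_in ?U x"
    unfolding rank_in_def using fin by (intro card_mono) auto
  ultimately have "(j - 1) * c < rank_in ?U x" by simp
  with upper x j show "x \<in> row_block ?U c j" by (auto simp: row_block_def)
qed

lemma increasing_blocks_eq_row_block:
  assumes j: "j \<in> {1..i}"
  shows "S j = row_block (\<Union>l\<in>{1..i}. S l) c j"
proof
  show "S j \<subseteq> row_block (\<Union>l\<in>{1..i}. S l) c j" by (rule increasing_blocks_subset_row_block[OF j])
  show "row_block (\<Union>l\<in>{1..i}. S l) c j \<subseteq> S j"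
  proof
    fix x assume x: "x \<in> row_block (\<Union>l\<in>{1..i}. S l) c j"
    then obtain l where l: "l \<in> {1..i}" "x \<in> S l" by (auto simp: row_block_def)
    then have "x \<in> row_block (\<Union>l\<in>{1..i}. S l) c l"
      using increasing_blocks_subset_row_block by blast
    with x l j row_blocks_disjoint[of j l] show "x \<in> S j" by fastforce
  qed
qed

end

section \<open>Two-row set-valued tableaux\<close>

lemma cells_rect2: "cells (rect2 i) = {1, 2} \<times> {1..i}"
  unfolding cells_def rect2_def by (auto simp: nth_Cons split: nat.splits)

lemma total_density_rect2:
  assumes "k \<ge> 1"
  shows "total_density (rect2 i) (rho_k k) = k * i"
proof -
  have "total_density (rect2 i) (rho_k k) = (\<Sum>a\<in>{1, 2}. \<Sum>j\<in>{1..i}. rho_k k (a, j))"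
    unfolding total_density_def cells_rect2 by (simp add: sum.cartesian_product)
  also have "\<dots> = i + i * (k - 1)" by (simp add: rho_k_def)
  also have "\<dots> = k * i" using assms by (simp add: algebra_simps diff_mult_distrib2)
  finally show ?thesis .
qed

definition tableau_row :: "(nat \<times> nat \<Rightarrow> nat set) \<Rightarrow> nat \<Rightarrow> nat \<Rightarrow> nat set" where
  "tableau_row T i a = (\<Union>j\<in>{1..i}. T (a, j))"

definition ballot_sets :: "nat \<Rightarrow> nat \<Rightarrow> nat set set" where
  "ballot_sets k i = {A. A \<subseteq> {1..k * i} \<and> card A = i \<and>
     (\<forall>m\<le>k * i. card ({1..m} - A) \<le> (k - 1) * card (A \<inter> {1..m}))}"

context
  fixes k i :: nat and T :: "nat \<times> nat \<Rightarrow> nat set"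
  assumes k: "k \<ge> 1" and T: "T \<in> SVT (rect2 i) (rho_k k)"
begin

lemma SVT_outside:
  assumes "c \<notin> cells (rect2 i)"
  shows "T c = {}"
proof -
  have "\<forall>c. c \<notin> cells (rect2 i) \<longrightarrow> T c = {}"
    using T unfolding SVT_def mem_Collect_eq by (elim conjE) assumption
  with assms show ?thesis by blast
qed

lemma SVT_card:
  assumes "a \<in> {1, 2}" "j \<in> {1..i}"
  shows "finite (T (a, j)) \<and> card (T (a, j)) = rho_k k (a, j)"
proof -
  have "\<forall>c\<in>cells (rect2 i). finite (T c) \<and> card (T c) = rho_k k c"
    using T unfolding SVT_def mem_Collect_eq by (elim conjE) assumption
  moreover have "(a, j) \<in> cells (rect2 i)" using assms by (simp add: cells_rect2)
  ultimately show ?thesis by blast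
qed

lemma SVT_disjoint:
  assumes "c \<in> cells (rect2 i)" "d \<in> cells (rect2 i)" "c \<noteq> d"
  shows "T c \<inter> T d = {}"
proof -
  have "\<forall>c\<in>cells (rect2 i). \<forall>d\<in>cells (rect2 i). c \<noteq> d \<longrightarrow> T c \<inter> T d = {}"
    using T unfolding SVT_def mem_Collect_eq by (elim conjE) assumption
  with assms show ?thesis by blast
qed

lemma SVT_row_less:
  assumes "a \<in> {1, 2}" "1 \<le> j" "Suc j \<le> i" "x \<in> T (a, j)" "y \<in> T (a, Suc j)"
  shows "x < y"
proof -
  have "\<forall>a j. (a, j) \<in> cells (rect2 i) \<and> (a, Suc j) \<in> cells (rect2 i) \<longrightarrow>
          (\<forall>x\<in>T (a, j). \<forall>y\<in>T (a, Suc j). x < y)"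
    using T unfolding SVT_def mem_Collect_eq by (elim conjE) assumption
  moreover have "(a, j) \<in> cells (rect2 i) \<and> (a, Suc j) \<in> cells (rect2 i)"
    using assms by (auto simp: cells_rect2)
  ultimately show ?thesis using assms(4,5) by blast
qed

lemma SVT_column_less:
  assumes "j \<in> {1..i}" "x \<in> T (1, j)" "y \<in> T (2, j)"
  shows "x < y"
proof -
  have "\<forall>a j. (a, j) \<in> cells (rect2 i) \<and> (Suc a, j) \<in> cells (rect2 i) \<longrightarrow>
          (\<forall>x\<in>T (a, j). \<forall>y\<in>T (Suc a, j). x < y)"
    using T unfolding SVT_def mem_Collect_eq by (elim conjE) assumption
  moreover have "(1, j) \<in> cells (rect2 i) \<and> (Suc 1, j) \<in> cells (rect2 i)"
    using assms by (auto simp: cells_rect2)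
  ultimately show ?thesis using assms(2,3) by (metis one_add_one plus_1_eq_Suc)
qed

lemma SVT_rows_Un: "tableau_row T i 1 \<union> tableau_row T i 2 = {1..k * i}"
proof -
  have "(\<Union>c\<in>cells (rect2 i). T c) = {1..total_density (rect2 i) (rho_k k)}"
    using T unfolding SVT_def mem_Collect_eq by (elim conjE) assumption
  then show ?thesis
    unfolding total_density_rect2[OF k] cells_rect2 tableau_row_def by auto
qed

lemma SVT_rows_disjoint: "tableau_row T i 1 \<inter> tableau_row T i 2 = {}"
  using SVT_disjoint unfolding tableau_row_def by (fastforce simp: cells_rect2)

lemma SVT_eq_row_block:
  assumes "a \<in> {1, 2}" "j \<in> {1..i}"
  shows "T (a, j) = row_block (tableau_row T i a) (rho_k k (a, j)) j"
proof -
  have "rho_k k (a, l) = rho_k k (a, j)" for l by (simp add: rho_k_def)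
  then show ?thesis
    unfolding tableau_row_def using SVT_card SVT_row_less assms
    by (intro increasing_blocks_eq_row_block) auto
qed

lemma card_tableau_row: "a \<in> {1, 2} \<Longrightarrow> card (tableau_row T i a) = i * rho_k k (a, 1)"
  unfolding tableau_row_def using SVT_card SVT_row_less
  by (intro card_UN_increasing_blocks) (auto simp: rho_k_def)

lemma first_row_in_ballot_sets: "tableau_row T i 1 \<in> ballot_sets k i"
proof -
  let ?A = "tableau_row T i 1" and ?B = "tableau_row T i 2"
  have A_sub: "?A \<subseteq> {1..k * i}" and B_eq: "?B = {1..k * i} - ?A"
    using SVT_rows_Un SVT_rows_disjoint by blast+
  have card_A: "card ?A = i" using card_tableau_row[of 1] by (simp add: rho_k_def)
  have fin_A: "finite ?A" using A_sub finite_subset by blast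
  have "card ({1..m} - ?A) \<le> (k - 1) * card (?A \<inter> {1..m})" if m: "m \<le> k * i" for m
  proof (cases "{1..m} - ?A = {}")
    case False
    \<comment> \<open>The largest \<open>y \<le> m\<close> outside \<open>A\<close> lies in some column \<open>j\<close> of row 2; the entry above it
      is the \<open>j\<close>-th element of \<open>A\<close> and is smaller than \<open>y\<close>, so \<open>A\<close> has \<open>j\<close> elements up to \<open>m\<close>.\<close>
    define y where "y = Max ({1..m} - ?A)"
    have y: "y \<in> {1..m} - ?A" "\<And>z. z \<in> {1..m} - ?A \<Longrightarrow> z \<le> y"
      unfolding y_def using False by (intro Max_in Max_ge; simp)+
    then have "{1..y} - ?A = {1..m} - ?A" by auto
    then have rank_y: "rank_in ?B y = card ({1..m} - ?A)"
      using y m rank_in_complement[of y "k * i" ?A] unfolding B_eq by simp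
    have "y \<in> ?B" using y m B_eq by auto
    also have "?B = (\<Union>j\<in>{1..i}. row_block ?B (k - 1) j)"
      using card_tableau_row[of 2] B_eq by (intro UN_row_blocks[symmetric]) (auto simp: rho_k_def mult.commute)
    finally obtain j where j: "j \<in> {1..i}" "y \<in> row_block ?B (k - 1) j" by blast
    then have "y \<in> T (2, j)" using SVT_eq_row_block[of 2 j] by (simp add: rho_k_def)
    moreover obtain x where x: "x \<in> T (1, j)"
      using SVT_card[of 1 j] j by (auto simp: rho_k_def card_Suc_eq)
    ultimately have "x < y" using SVT_column_less j by blast
    have "x \<in> row_block ?A 1 j" using SVT_eq_row_block[of 1 j] j x by (simp add: rho_k_def)
    then have "j = rank_in ?A x" using j by (auto simp: row_block_def)
    also have "\<dots> \<le> rank_in ?A m" using \<open>x < y\<close> y fin_A by (intro rank_in_mono) auto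
    also have "\<dots> = card (?A \<inter> {1..m})" using A_sub by (rule rank_in_eq_card_Int)
    finally have "j \<le> card (?A \<inter> {1..m})" .
    have "card ({1..m} - ?A) \<le> j * (k - 1)"
      using j rank_y by (simp add: row_block_def)
    also have "j * (k - 1) \<le> card (?A \<inter> {1..m}) * (k - 1)"
      using \<open>j \<le> card (?A \<inter> {1..m})\<close> by (rule mult_le_mono1)
    finally show ?thesis by (simp add: mult.commute)
  qed (metis card.empty zero_le)
  with A_sub card_A show ?thesis unfolding ballot_sets_def by simp
qed

end

definition tableau_of_first_row :: "nat \<Rightarrow> nat \<Rightarrow> nat set \<Rightarrow> nat \<times> nat \<Rightarrow> nat set" where
  "tableau_of_first_row k i A c =
     (if c \<in> cells (rect2 i)
      then row_block (if fst c = 1 then A else {1..k * i} - A) (rho_k k c) (snd c)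
      else {})"

lemma SVT_eq_tableau_of_first_row:
  assumes "k \<ge> 1" "T \<in> SVT (rect2 i) (rho_k k)"
  shows "tableau_of_first_row k i (tableau_row T i 1) = T"
proof
  fix c
  have row2: "tableau_row T i 2 = {1..k * i} - tableau_row T i 1"
    using SVT_rows_Un[OF assms] SVT_rows_disjoint[OF assms] by blast
  show "tableau_of_first_row k i (tableau_row T i 1) c = T c"
  proof (cases "c \<in> cells (rect2 i)")
    case True
    then obtain a j where "c = (a, j)" "a \<in> {1, 2}" "j \<in> {1..i}" by (auto simp: cells_rect2)
    with True show ?thesis
      using SVT_eq_row_block[OF assms, of a j] row2 by (auto simp: tableau_of_first_row_def)
  qed (simp add: tableau_of_first_row_def SVT_outside[OF assms])
qed

context
  fixes k i :: nat and A :: "nat set"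
  assumes k: "k \<ge> 1" and A: "A \<in> ballot_sets k i"
begin

private abbreviation "T \<equiv> tableau_of_first_row k i A"
private abbreviation "B \<equiv> {1..k * i} - A"

lemma ballot_set_subset: "A \<subseteq> {1..k * i}"
  and card_ballot_set: "card A = i"
  using A by (simp_all add: ballot_sets_def)

lemma finite_ballot_set: "finite A"
  using ballot_set_subset finite_subset by blast

lemma card_ballot_set_complement: "card B = (k - 1) * i"
proof -
  have "card B = k * i - i"
    using ballot_set_subset card_ballot_set finite_ballot_set by (simp add: card_Diff_subset)
  then show ?thesis by (simp add: diff_mult_distrib)
qed

lemma tableau_of_first_row_cell:
  "a \<in> {1, 2} \<Longrightarrow> j \<in> {1..i} \<Longrightarrow> T (a, j) = (if a = 1 then row_block A 1 j else row_block B (k - 1) j)"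
  by (auto simp: tableau_of_first_row_def cells_rect2 rho_k_def)

lemma first_row_of_tableau_of_first_row: "tableau_row T i 1 = A"
  using UN_row_blocks[of A 1 i] card_ballot_set finite_ballot_set
  by (simp add: tableau_row_def tableau_of_first_row_cell)

lemma tableau_of_first_row_Union: "(\<Union>c\<in>cells (rect2 i). T c) = {1..k * i}"
proof -
  have "(\<Union>c\<in>cells (rect2 i). T c) = (\<Union>j\<in>{1..i}. T (1, j)) \<union> (\<Union>j\<in>{1..i}. T (2, j))"
    unfolding cells_rect2 by blast
  also have "\<dots> = (\<Union>j\<in>{1..i}. row_block A 1 j) \<union> (\<Union>j\<in>{1..i}. row_block B (k - 1) j)"
    by (simp add: tableau_of_first_row_cell)
  also have "\<dots> = A \<union> B"
    using UN_row_blocks[of A 1 i] UN_row_blocks[of B "k - 1" i]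
      card_ballot_set card_ballot_set_complement finite_ballot_set by simp
  finally show ?thesis using ballot_set_subset by blast
qed

lemma tableau_of_first_row_card:
  assumes "c \<in> cells (rect2 i)"
  shows "finite (T c) \<and> card (T c) = rho_k k c"
proof -
  obtain a j where c: "c = (a, j)" "a \<in> {1, 2}" "j \<in> {1..i}" using assms by (auto simp: cells_rect2)
  have "j * 1 \<le> card A" "j * (k - 1) \<le> card B"
    using c(3) card_ballot_set card_ballot_set_complement by simp_all
  moreover have "finite (row_block A 1 j)" "finite (row_block B (k - 1) j)"
    using finite_ballot_set by (auto intro: finite_subset[OF row_block_subset])
  ultimately show ?thesis
    using c finite_ballot_set card_row_block[of A j 1] card_row_block[of B j "k - 1"]
    by (auto simp: tableau_of_first_row_cell rho_k_def)
qed

lemma tableau_of_first_row_disjoint: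
  assumes "c \<in> cells (rect2 i)" "d \<in> cells (rect2 i)" "c \<noteq> d"
  shows "T c \<inter> T d = {}"
proof -
  obtain a j b l where cd: "c = (a, j)" "d = (b, l)" "a \<in> {1, 2}" "b \<in> {1, 2}" "j \<in> {1..i}" "l \<in> {1..i}"
    using assms(1,2) by (auto simp: cells_rect2)
  show ?thesis
  proof (cases "a = b")
    case True
    then have "j \<noteq> l" using cd assms(3) by simp
    then show ?thesis
      using cd True row_blocks_disjoint[of j l] by (auto simp: tableau_of_first_row_cell)
  next
    case False
    have "T c \<subseteq> (if a = 1 then A else B)" "T d \<subseteq> (if b = 1 then A else B)"
      using cd row_block_subset by (simp_all add: tableau_of_first_row_cell)
    then show ?thesis using False cd(3,4) by (cases "a = 1") (simp_all, blast+)
  qed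
qed

lemma tableau_of_first_row_row_less:
  assumes "(a, j) \<in> cells (rect2 i)" "(a, Suc j) \<in> cells (rect2 i)" "x \<in> T (a, j)" "y \<in> T (a, Suc j)"
  shows "x < y"
  using assms finite_ballot_set row_block_less[of A x 1 j y] row_block_less[of B x "k - 1" j y]
  by (auto simp: cells_rect2 tableau_of_first_row_cell)

lemma tableau_of_first_row_column_less:
  assumes j: "j \<in> {1..i}" and x: "x \<in> T (1, j)" and y: "y \<in> T (2, j)"
  shows "x < y"
proof (rule ccontr)
  \<comment> \<open>The ballot condition at \<open>y\<close> forces \<open>A\<close> to have at least \<open>j\<close> elements up to \<open>y\<close>.\<close>
  assume "\<not> x < y"
  have x_rank: "x \<in> A" "rank_in A x = j"
    using j x by (auto simp: tableau_of_first_row_cell row_block_def)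
  have y_rank: "y \<in> B" "(j - 1) * (k - 1) < rank_in B y"
    using j y by (auto simp: tableau_of_first_row_cell row_block_def)
  then have "y \<le> k * i" "x \<noteq> y" using x_rank by auto
  have "(j - 1) * (k - 1) < card ({1..y} - A)"
    using y_rank rank_in_complement[OF \<open>y \<le> k * i\<close>] by simp
  also have "\<dots> \<le> (k - 1) * card (A \<inter> {1..y})"
    using A \<open>y \<le> k * i\<close> by (simp add: ballot_sets_def)
  also have "card (A \<inter> {1..y}) = rank_in A y"
    using ballot_set_subset by (simp add: rank_in_eq_card_Int)
  finally have "j - 1 < rank_in A y" by (simp add: mult.commute)
  moreover have "rank_in A y < rank_in A x"
    using \<open>\<not> x < y\<close> \<open>x \<noteq> y\<close> x_rank finite_ballot_set
    by (intro rank_in_strict_mono) auto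
  ultimately show False using x_rank by simp
qed

lemma tableau_of_first_row_in_SVT: "T \<in> SVT (rect2 i) (rho_k k)"
  unfolding SVT_def mem_Collect_eq total_density_rect2[OF k]
proof (intro conjI allI impI ballI)
  show "T c = {}" if "c \<notin> cells (rect2 i)" for c
    using that by (simp add: tableau_of_first_row_def)
next
  fix a j x y
  assume "(a, j) \<in> cells (rect2 i) \<and> (a, Suc j) \<in> cells (rect2 i)" "x \<in> T (a, j)" "y \<in> T (a, Suc j)"
  then show "x < y" using tableau_of_first_row_row_less by blast
next
  fix a j x y
  assume "(a, j) \<in> cells (rect2 i) \<and> (Suc a, j) \<in> cells (rect2 i)" "x \<in> T (a, j)" "y \<in> T (Suc a, j)"
  then show "x < y"
    using tableau_of_first_row_column_less[of j x y] by (auto simp: cells_rect2 numeral_2_eq_2)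
qed (simp_all add: tableau_of_first_row_card tableau_of_first_row_disjoint tableau_of_first_row_Union)

end

lemma bij_betw_first_row:
  assumes "k \<ge> 1"
  shows "bij_betw (\<lambda>T. tableau_row T i 1) (SVT (rect2 i) (rho_k k)) (ballot_sets k i)"
proof (rule bij_betw_byWitness[where f' = "tableau_of_first_row k i"])
  show "\<forall>T\<in>SVT (rect2 i) (rho_k k). tableau_of_first_row k i (tableau_row T i 1) = T"
    using SVT_eq_tableau_of_first_row[OF assms] by blast
  show "\<forall>A\<in>ballot_sets k i. tableau_row (tableau_of_first_row k i A) i 1 = A"
    using first_row_of_tableau_of_first_row[OF assms] by blast
  show "(\<lambda>T. tableau_row T i 1) ` SVT (rect2 i) (rho_k k) \<subseteq> ballot_sets k i"
    using first_row_in_ballot_sets[OF assms] by blast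
  show "tableau_of_first_row k i ` ballot_sets k i \<subseteq> SVT (rect2 i) (rho_k k)"
    using tableau_of_first_row_in_SVT[OF assms] by blast
qed

lemma finite_SVT_rect2: "k \<ge> 1 \<Longrightarrow> finite (SVT (rect2 i) (rho_k k))"
proof -
  assume k: "k \<ge> 1"
  have "ballot_sets k i \<subseteq> Pow {1..k * i}" by (auto simp: ballot_sets_def)
  then have "finite (ballot_sets k i)" by (rule finite_subset) simp
  then show ?thesis using bij_betw_finite[OF bij_betw_first_row[OF k]] by blast
qed

lemma SVT_rect2_shape_unique:
  assumes "k \<ge> 1" "T \<in> SVT (rect2 i) (rho_k k)" "T \<in> SVT (rect2 i') (rho_k k)"
  shows "i = i'"
proof -
  have "\<not> i < i'" if "T \<in> SVT (rect2 i) (rho_k k)" "T \<in> SVT (rect2 i') (rho_k k)" for i i'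
  proof
    assume "i < i'"
    then have "T (1, i') = {}" using SVT_outside[OF assms(1) that(1)] by (simp add: cells_rect2)
    moreover have "card (T (1, i')) = 1"
      using SVT_card[OF assms(1) that(2), of 1 i'] \<open>i < i'\<close> by (simp add: rho_k_def)
    ultimately show False by simp
  qed
  then show ?thesis using assms(2,3) by (meson linorder_neqE_nat)
qed

section \<open>Ballot sets as ballot words\<close>

definition set_of_word :: "bool list \<Rightarrow> nat set" where
  "set_of_word w = {x \<in> {1..length w}. w ! (x - 1)}"

definition word_of_set :: "nat \<Rightarrow> nat set \<Rightarrow> bool list" where
  "word_of_set N A = map (\<lambda>p. Suc p \<in> A) [0..<N]"

lemma length_word_of_set [simp]: "length (word_of_set N A) = N"
  by (simp add: word_of_set_def)

lemma set_of_word_of_set: "A \<subseteq> {1..N} \<Longrightarrow> set_of_word (word_of_set N A) = A"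
  by (force simp: set_of_word_def word_of_set_def)

lemma word_of_set_of_word: "word_of_set (length w) (set_of_word w) = w"
  by (rule nth_equalityI) (simp_all add: word_of_set_def set_of_word_def)

lemma card_positions_take:
  "m \<le> length w \<Longrightarrow> card {x \<in> {1..m}. w ! (x - 1) = b} = count_list (take m w) b"
proof (induction m)
  case (Suc m)
  have "{x \<in> {1..Suc m}. w ! (x - 1) = b} =
          {x \<in> {1..m}. w ! (x - 1) = b} \<union> (if w ! m = b then {Suc m} else {})"
    by (auto simp: le_Suc_eq)
  with Suc show ?case by (simp add: take_Suc_conv_app_nth)
qed simp

lemma card_set_of_word_prefix:
  assumes "m \<le> length w"
  shows "card (set_of_word w \<inter> {1..m}) = count_list (take m w) True"
    and "card ({1..m} - set_of_word w) = count_list (take m w) False"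
proof -
  have "set_of_word w \<inter> {1..m} = {x \<in> {1..m}. w ! (x - 1) = True}"
    "{1..m} - set_of_word w = {x \<in> {1..m}. w ! (x - 1) = False}"
    using assms by (auto simp: set_of_word_def)
  then show "card (set_of_word w \<inter> {1..m}) = count_list (take m w) True"
    and "card ({1..m} - set_of_word w) = count_list (take m w) False"
    using card_positions_take[OF assms, of True] card_positions_take[OF assms, of False] by simp_all
qed

lemma count_list_False_True: "count_list w False + count_list w True = length w"
  by (induction w) auto

lemma set_of_word_in_ballot_sets_iff:
  assumes "k \<ge> 1" "length w = k * i"
  shows "set_of_word w \<in> ballot_sets k i \<longleftrightarrow> w \<in> ballot_words k 0 i"
proof -
  have sub: "set_of_word w \<subseteq> {1..k * i}" using assms(2) by (auto simp: set_of_word_def)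
  then have card: "card (set_of_word w) = count_list w True"
    using card_set_of_word_prefix(1)[of "length w" w] assms(2) by (simp add: Int_absorb2)
  have prefix: "(\<forall>m\<le>k * i. card ({1..m} - set_of_word w) \<le> (k - 1) * card (set_of_word w \<inter> {1..m})) \<longleftrightarrow>
      (\<forall>j\<le>length w. count_list (take j w) False \<le> 0 + (k - 1) * count_list (take j w) True)"
    using card_set_of_word_prefix assms(2) by simp
  have "count_list w True = i \<Longrightarrow> count_list w False = 0 + (k - 1) * count_list w True"
    using count_list_False_True[of w] assms by (simp add: diff_mult_distrib)
  then show ?thesis
    using sub card prefix unfolding ballot_sets_def ballot_words_def ballot_prefix_iff by auto
qed

lemma bij_betw_set_of_word:
  assumes "k \<ge> 1"
  shows "bij_betw set_of_word (ballot_words k 0 i) (ballot_sets k i)"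
proof (rule bij_betw_byWitness[where f' = "word_of_set (k * i)"])
  have len: "length w = k * i" if "w \<in> ballot_words k 0 i" for w
    using that length_ballot[OF assms, of 0 w] by (simp add: ballot_words_def)
  show "\<forall>w\<in>ballot_words k 0 i. word_of_set (k * i) (set_of_word w) = w"
    using len word_of_set_of_word by metis
  show "\<forall>A\<in>ballot_sets k i. set_of_word (word_of_set (k * i) A) = A"
    by (simp add: ballot_sets_def set_of_word_of_set)
  show "set_of_word ` ballot_words k 0 i \<subseteq> ballot_sets k i"
    using len set_of_word_in_ballot_sets_iff[OF assms] by blast
  show "word_of_set (k * i) ` ballot_sets k i \<subseteq> ballot_words k 0 i"
  proof
    fix w assume "w \<in> word_of_set (k * i) ` ballot_sets k i"
    then obtain A where A: "A \<in> ballot_sets k i" "w = word_of_set (k * i) A" by blast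
    then have "set_of_word w = A" by (simp add: ballot_sets_def set_of_word_of_set)
    with A show "w \<in> ballot_words k 0 i" using set_of_word_in_ballot_sets_iff[OF assms, of w] by simp
  qed
qed

lemma card_SVT_rect2: "k \<ge> 1 \<Longrightarrow> card (SVT (rect2 i) (rho_k k)) = card (ballot_words k 0 i)"
  using bij_betw_same_card[OF bij_betw_first_row] bij_betw_same_card[OF bij_betw_set_of_word] by metis

section \<open>Tuples of tableaux\<close>

definition SVT_tuples :: "nat \<Rightarrow> nat \<Rightarrow> nat \<Rightarrow> (nat \<times> nat \<Rightarrow> nat set) list set" where
  "SVT_tuples k r n = {Ts. length Ts = r \<and>
     (\<exists>is. length is = r \<and> sum_list is = n \<and> (\<forall>j<r. Ts ! j \<in> SVT (rect2 (is ! j)) (rho_k k)))}"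

lemma SVT_tuples_list_all2:
  "SVT_tuples k r n = {Ts. length Ts = r \<and>
     (\<exists>is. sum_list is = n \<and> list_all2 (\<lambda>T m. T \<in> SVT (rect2 m) (rho_k k)) Ts is)}"
  unfolding SVT_tuples_def list_all2_conv_all_nth by auto

lemma SVT_tuples_0: "SVT_tuples k 0 n = (if n = 0 then {[]} else {})"
  by (auto simp: SVT_tuples_def)

lemma SVT_tuples_Suc:
  "SVT_tuples k (Suc r) n =
     (\<Union>m\<le>n. (\<lambda>(T, Ts). T # Ts) ` (SVT (rect2 m) (rho_k k) \<times> SVT_tuples k r (n - m)))"
proof (rule set_eqI)
  fix Ts
  let ?P = "\<lambda>T m. T \<in> SVT (rect2 m) (rho_k k)"
  show "Ts \<in> SVT_tuples k (Suc r) n \<longleftrightarrow>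
    Ts \<in> (\<Union>m\<le>n. (\<lambda>(T, Ts). T # Ts) ` (SVT (rect2 m) (rho_k k) \<times> SVT_tuples k r (n - m)))"
  proof
    assume "Ts \<in> SVT_tuples k (Suc r) n"
    then obtain T Ts' ms where Ts: "Ts = T # Ts'" "length Ts' = r" "sum_list ms = n" "list_all2 ?P (T # Ts') ms"
      by (auto simp: SVT_tuples_list_all2 length_Suc_conv)
    then obtain m ms' where "ms = m # ms'" "?P T m" "list_all2 ?P Ts' ms'"
      by (auto simp: list_all2_Cons1)
    with Ts have "m \<le> n" "T \<in> SVT (rect2 m) (rho_k k)" "Ts' \<in> SVT_tuples k r (n - m)"
      by (auto simp: SVT_tuples_list_all2)
    with Ts(1) show "Ts \<in> (\<Union>m\<le>n. (\<lambda>(T, Ts). T # Ts) ` (SVT (rect2 m) (rho_k k) \<times> SVT_tuples k r (n - m)))"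
      by blast
  next
    assume "Ts \<in> (\<Union>m\<le>n. (\<lambda>(T, Ts). T # Ts) ` (SVT (rect2 m) (rho_k k) \<times> SVT_tuples k r (n - m)))"
    then obtain m T Ts' where "m \<le> n" "?P T m" "Ts' \<in> SVT_tuples k r (n - m)" "Ts = T # Ts'"
      by auto
    moreover from this(3) obtain ms' where "length Ts' = r" "sum_list ms' = n - m" "list_all2 ?P Ts' ms'"
      by (auto simp: SVT_tuples_list_all2)
    ultimately show "Ts \<in> SVT_tuples k (Suc r) n"
      unfolding SVT_tuples_list_all2 by (auto intro!: exI[of _ "m # ms'"])
  qed
qed

lemma finite_SVT_tuples: "k \<ge> 1 \<Longrightarrow> finite (SVT_tuples k r n)"
proof (induction r arbitrary: n)
  case 0
  then show ?case by (simp add: SVT_tuples_0)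
next
  case (Suc r)
  then show ?case unfolding SVT_tuples_Suc using finite_SVT_rect2 by auto
qed

lemma card_SVT_tuples_Suc:
  assumes "k \<ge> 1"
  shows "card (SVT_tuples k (Suc r) n) = (\<Sum>m\<le>n. card (ballot_words k 0 m) * card (SVT_tuples k r (n - m)))"
  unfolding SVT_tuples_Suc
proof (subst card_UN_image_Times)
  show "m \<le> n \<Longrightarrow> m' \<le> n \<Longrightarrow> m \<noteq> m' \<Longrightarrow> SVT (rect2 m) (rho_k k) \<inter> SVT (rect2 m') (rho_k k) = {}"
    for m m' using SVT_rect2_shape_unique[OF assms] by blast
qed (auto simp: finite_SVT_rect2[OF assms] finite_SVT_tuples[OF assms] card_SVT_rect2[OF assms] inj_on_def)

lemma card_SVT_tuples:
  assumes "k \<ge> 1"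
  shows "card (SVT_tuples k (Suc r) n) = card (ballot_words k r n)"
proof (induction r arbitrary: n)
  case 0
  have "card (SVT_tuples k 1 n) = (\<Sum>m\<le>n. if m = n then card (ballot_words k 0 m) else 0)"
    unfolding One_nat_def card_SVT_tuples_Suc[OF assms] by (intro sum.cong) (auto simp: SVT_tuples_0)
  then show ?case by simp
next
  case (Suc r)
  then show ?case
    by (simp add: card_SVT_tuples_Suc[OF assms, of "Suc r"] card_ballot_words_Suc[OF assms])
qed

theorem proposition2:
  fixes k r n :: nat
  assumes "k \<ge> 1" and "r \<ge> 1"
  shows "real (card {Ts :: (nat \<times> nat \<Rightarrow> nat set) list. length Ts = r \<and>
            (\<exists>is :: nat list. length is = r \<and> sum_list is = n \<and>
               (\<forall>j<r. Ts ! j \<in> SVT (rect2 (is ! j)) (rho_k k)))})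
         = real r / real (k * n + r) * real ((k * n + r) choose n)"
proof -
  obtain r' where r: "r = Suc r'" using assms(2) by (cases r) auto
  have "int (card (SVT_tuples k r n)) = raney k r n"
    unfolding r card_SVT_tuples[OF assms(1)] card_ballot_words[OF assms(1)] ..
  then have "real (card (SVT_tuples k r n)) = of_int (raney k r n)"
    by (metis of_int_of_nat_eq)
  also have "\<dots> = real r / real (k * n + r) * real ((k * n + r) choose n)"
    using real_of_int_raney[OF assms(2,1)] .
  finally show ?thesis unfolding SVT_tuples_def .
qed

end
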